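(* Let $m,n,p,q\in\mathbb{R}$ with $m<0$, let $P(t)=t^5+mt^3+nt^2+pt+q$, and set $u=\frac{2\sqrt{-m}}{\sqrt5}$. Then $P$ has at most three roots on each of the half-lines $(u,\infty)$ and $(-\infty,-u)$. *)

theory Defs
  imports Complex_Main
begin

end

theory Submission
  imports Defs
begin

text \<open>By Rolle's theorem a function with \<open>k\<close> zeros on an interval has a derivative with at least
  \<open>k - 1\<close> zeros there, so a function whose \<open>n\<close>-th derivative never vanishes on an interval has at
  most \<open>n\<close> zeros on it. The third derivative \<open>60 t\<^sup>2 + 6 m\<close> of \<open>P\<close> is positive
  exactly when \<open>\<bar>t\<bar> > \<surd>(-m/10)\<close>, and \<open>u = \<surd>(-4m/5)\<close> exceeds this bound.\<close>

lemma Rolle_connected: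
  fixes f f' :: "real \<Rightarrow> real"
  assumes S: "connected S"
    and deriv: "\<And>x. x \<in> S \<Longrightarrow> (f has_real_derivative f' x) (at x)"
    and "a \<in> S" "b \<in> S" "a < b" "f a = f b"
  obtains c where "a < c" "c < b" "c \<in> S" "f' c = 0"
proof -
  have ab_sub: "{a..b} \<subseteq> S"
    using S \<open>a \<in> S\<close> \<open>b \<in> S\<close> by (rule connected_contains_Icc)
  have "continuous_on {a..b} f"
    using ab_sub by (intro continuous_at_imp_continuous_on) (blast intro: DERIV_isCont deriv)
  moreover have "f differentiable (at x)" if "a < x" "x < b" for x
  proof -
    have "x \<in> S"
      using that ab_sub by auto
    then show ?thesis
      using deriv real_differentiable_def by blast
  qed
  ultimately obtain c where c: "a < c" "c < b" "(f has_real_derivative 0) (at c)"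
    using Rolle[OF \<open>a < b\<close> \<open>f a = f b\<close>] by blast
  moreover have "c \<in> S"
    using ab_sub c by auto
  ultimately show thesis
    using that deriv DERIV_unique by blast
qed

lemma card_zeros_le_card_deriv_zeros_below_Max:
  fixes f f' :: "real \<Rightarrow> real"
  assumes S: "connected S"
    and deriv: "\<And>x. x \<in> S \<Longrightarrow> (f has_real_derivative f' x) (at x)"
    and fin: "finite {x \<in> S. f' x = 0}"
    and "finite A" "A \<noteq> {}" "A \<subseteq> {x \<in> S. f x = 0}"
  shows "card A \<le> card {x \<in> S. f' x = 0 \<and> x < Max A} + 1"
  using \<open>finite A\<close> \<open>A \<noteq> {}\<close> \<open>A \<subseteq> {x \<in> S. f x = 0}\<close>
proof (induction A rule: finite_linorder_max_induct)
  case empty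
  then show ?case by simp
next
  case (insert b A)
  have fin_below: "finite {x \<in> S. f' x = 0 \<and> x < y}" for y
    using fin by (rule finite_subset[rotated]) auto
  show ?case
  proof (cases "A = {}")
    case True
    then show ?thesis by simp
  next
    case False
    let ?a = "Max A"
    have "?a \<in> A" "?a < b"
      using insert.hyps False by auto
    then obtain c where c: "?a < c" "c < b" "c \<in> S" "f' c = 0"
      using Rolle_connected[OF S deriv, of ?a b] insert.prems by auto
    have "insert c {x \<in> S. f' x = 0 \<and> x < ?a} \<subseteq> {x \<in> S. f' x = 0 \<and> x < b}"
      using c by auto
    then have "card (insert c {x \<in> S. f' x = 0 \<and> x < ?a}) \<le> card {x \<in> S. f' x = 0 \<and> x < b}"
      by (rule card_mono[OF fin_below])
    then have "card {x \<in> S. f' x = 0 \<and> x < ?a} + 1 \<le> card {x \<in> S. f' x = 0 \<and> x < b}"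
      using c fin_below by simp
    moreover have "card A \<le> card {x \<in> S. f' x = 0 \<and> x < ?a} + 1"
      using insert False by auto
    moreover have "b \<notin> A"
      using insert.hyps by blast
    moreover have "Max (insert b A) = b"
      using insert.hyps by (intro Max_eqI) (auto simp: less_imp_le)
    ultimately show ?thesis
      using insert.hyps by simp
  qed
qed

lemma card_zeros_le_card_deriv_zeros_plus_one:
  fixes f f' :: "real \<Rightarrow> real"
  assumes S: "connected S"
    and deriv: "\<And>x. x \<in> S \<Longrightarrow> (f has_real_derivative f' x) (at x)"
    and fin: "finite {x \<in> S. f' x = 0}"
  shows "finite {x \<in> S. f x = 0}" and "card {x \<in> S. f x = 0} \<le> card {x \<in> S. f' x = 0} + 1"
proof -
  have bound: "card A \<le> card {x \<in> S. f' x = 0} + 1"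
    if "finite A" "A \<subseteq> {x \<in> S. f x = 0}" for A
  proof (cases "A = {}")
    case False
    have "card {x \<in> S. f' x = 0 \<and> x < Max A} \<le> card {x \<in> S. f' x = 0}"
      using fin by (auto intro: card_mono)
    then show ?thesis
      using card_zeros_le_card_deriv_zeros_below_Max[OF S deriv fin that(1) False that(2)] by simp
  qed simp
  show "finite {x \<in> S. f x = 0}"
  proof (rule ccontr)
    assume "infinite {x \<in> S. f x = 0}"
    then obtain A where "finite A" "card A = card {x \<in> S. f' x = 0} + 2" "A \<subseteq> {x \<in> S. f x = 0}"
      using infinite_arbitrarily_large by meson
    then show False
      using bound by fastforce
  qed
  then show "card {x \<in> S. f x = 0} \<le> card {x \<in> S. f' x = 0} + 1"
    using bound by blast
qed

lemma card_zeros_le_order_of_nonvanishing_derivative: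
  fixes D :: "nat \<Rightarrow> real \<Rightarrow> real"
  assumes S: "connected S"
    and deriv: "\<And>k x. k < n \<Longrightarrow> x \<in> S \<Longrightarrow> (D k has_real_derivative D (Suc k) x) (at x)"
    and nonzero: "\<And>x. x \<in> S \<Longrightarrow> D n x \<noteq> 0"
  shows "finite {x \<in> S. D 0 x = 0} \<and> card {x \<in> S. D 0 x = 0} \<le> n"
  using deriv nonzero
proof (induction n arbitrary: D)
  case 0
  then have "{x \<in> S. D 0 x = 0} = {}"
    by auto
  then show ?case
    by (simp only: finite.emptyI card.empty le_refl)
next
  case (Suc n)
  have "finite {x \<in> S. D 1 x = 0} \<and> card {x \<in> S. D 1 x = 0} \<le> n"
    using Suc.IH[of "\<lambda>k. D (Suc k)"] Suc.prems by simp
  then show ?case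
    using card_zeros_le_card_deriv_zeros_plus_one[OF S, of "D 0" "D 1"] Suc.prems by fastforce
qed

theorem corollary2:
  fixes m n p q :: real
  assumes "m < 0"
  defines "P \<equiv> (\<lambda>t::real. t^5 + m * t^3 + n * t^2 + p * t + q)"
    and "u \<equiv> 2 * sqrt (- m) / sqrt 5"
  shows "finite {t. t > u \<and> P t = 0} \<and> card {t. t > u \<and> P t = 0} \<le> 3 \<and>
         finite {t. t < - u \<and> P t = 0} \<and> card {t. t < - u \<and> P t = 0} \<le> 3"
proof -
  define D where "D = (\<lambda>k. [P, \<lambda>t. 5*t^4 + 3*m*t^2 + 2*n*t + p,
    \<lambda>t. 20*t^3 + 6*m*t + 2*n, \<lambda>t. 60*t^2 + 6*m] ! k)"
  have deriv: "(D k has_real_derivative D (Suc k) x) (at x)" if "k < 3" for k x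
  proof -
    have "k = 0 \<or> k = 1 \<or> k = 2"
      using that by linarith
    then show ?thesis
      unfolding D_def P_def by (elim disjE) (auto intro!: derivative_eq_intros simp: algebra_simps)
  qed
  have "u\<^sup>2 = - 4 * m / 5"
    using \<open>m < 0\<close> unfolding u_def by (simp add: power_divide power_mult_distrib)
  have "0 \<le> u"
    using \<open>m < 0\<close> by (simp add: u_def)
  have nonzero: "D 3 t \<noteq> 0" if "u < \<bar>t\<bar>" for t
  proof -
    have "u\<^sup>2 < t\<^sup>2"
      using that \<open>0 \<le> u\<close> power_strict_mono[of u "\<bar>t\<bar>" 2] by simp
    then show ?thesis
      using \<open>u\<^sup>2 = - 4 * m / 5\<close> \<open>m < 0\<close> unfolding D_def by (simp add: numeral_3_eq_3)
  qed
  have "D 0 = P"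
    by (simp add: D_def)
  then have "finite {t \<in> {u<..}. P t = 0} \<and> card {t \<in> {u<..}. P t = 0} \<le> 3"
    and "finite {t \<in> {..< -u}. P t = 0} \<and> card {t \<in> {..< -u}. P t = 0} \<le> 3"
    using card_zeros_le_order_of_nonvanishing_derivative[of "{u<..}" 3 D, OF connected_Ioi deriv]
      card_zeros_le_order_of_nonvanishing_derivative[of "{..< -u}" 3 D, OF connected_Iio deriv]
      nonzero \<open>0 \<le> u\<close>
    by fastforce+
  then show ?thesis
    by simp
qed

end
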